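(* Let $t(x_1,\dots,x_n)$ be any Łukasiewicz $\mu$-term. For every input vector $\vec r=(r_1,\dots,r_n)\in[0,1]^n$, the evaluation algorithm described in the context terminates with a conditioned linear expression $C_{\vec r}\vdash e_{\vec r}$ in variables $x_1,\dots,x_n$ satisfying (P1) $C_{\vec r}(\vec r)$ is true, and (P2) for all $\vec s\in\mathbb R^n$, if $C_{\vec r}(\vec s)$ is true then $\vec s\in[0,1]^n$ and $e_{\vec r}(\vec s)=t(\vec s)$. Moreover, the set $\{C_{\vec r}\vdash e_{\vec r}\mid\vec r\in[0,1]^n\}$ of possible results is finite, and hence is a system of conditioned linear expressions representing the function $t:[0,1]^n\to[0,1]$.
   Context: Łukasiewicz $\mu$-terms: $t::=x\mid\underline0\mid\underline1\mid r\,t\mid t\sqcup t\mid t\sqcap t\mid t\oplus t\mid t\odot t\mid\mu x.t\mid\nu x.t$, with $r\in[0,1]$ real; $\mu,\nu$ bind. $t(x_1,\dots,x_n)$ means free variables are among $x_1,\dots,x_n$. Value at $\vec r\in[0,1]^n$: $x_i\mapsto r_i$, $\underline0\mapsto0$, $\underline1\mapsto1$, $r\,t\mapsto r\cdot t(\vec r)$, $\sqcup,\sqcap$ max/min, $t_1\oplus t_2\mapsto\min(t_1(\vec r)+t_2(\vec r),1)$, $t_1\odot t_2\mapsto\max(t_1(\vec r)+t_2(\vec r)-1,0)$, $(\mu y.t)(\vec r)$ and $(\nu y.t)(\vec r)$ the least and greatest fixed points of the monotone map $r'\mapsto t(\vec r,r')$ on $[0,1]$. A linear expression in $x_1,\dots,x_n$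 is $q_1x_1+\dots+q_nx_n+q$ ($q_i,q$ real). A conditioned linear expression $C\vdash e$ consists of a linear expression $e$ and a finite set $C$ of inequalities $e_1<e_2$ or $e_1\le e_2$ between linear expressions; $C(\vec r)$ is the conjunction of its instances. A finite set $\mathcal F$ of conditioned linear expressions represents $f:[0,1]^n\to[0,1]$ if for every $\vec r\in[0,1]^n$ some $(C\vdash e)\in\mathcal F$ has $C(\vec r)$ true, and whenever $(C\vdash e)\in\mathcal F$ and $C(\vec r)$ is true ($\vec r\in[0,1]^n$), $e(\vec r)=f(\vec r)$. For an expression/constraint in $x_1,\dots,x_{n+1}$, $C(x_1,\dots,x_n,d)$ denotes substitution of a linear expression $d(x_1,\dots,x_n)$ for $x_{n+1}$. The algorithm (real-number model of computation) on input $t(x_1,\dots,x_n)$ and $\vec r$ returns $C\vdash e$, recursively on $t$. Atoms: return the range constraints $\{0\le x_k\le1\}_k$ with $e$ equal to $x_i$, $0$ or $1$. For compound non-fixed-point terms, recursively obtain $C_i\vdash e_i$ for the subterms and return the union of the $C_i$ together with the constraint selecting the linear piece of the connective valid at $\vec r$; e.g. for $t_1\oplus t_2$: if $e_1(\vec r)+e_2(\vec r)\le1$ return $C_1,C_2,e_1+e_2\le1\vdash e_1+e_2$, otherwise $C_1,C_2,e_1+e_2\ge1\vdash 1$ (analogously for $\sqcup,\sqcap,\odot$; for $r\,t_1$ return $C_1\vdash r e_1$). For $\mu x_{n+1}.t'$: start with $D=\emptyset$, $d=0$. Loop: recursively compute $t'$ at $(\vec r,d(\vec r))$ as $C\vdash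 e$ with $e=q_1x_1+\dots+q_nx_n+q_{n+1}x_{n+1}+q$. If $q_{n+1}\ne1$, let $f=\frac1{1-q_{n+1}}(q_1x_1+\dots+q_nx_n+q)$; if $C(\vec r,f(\vec r))$ holds, return $D\cup C(\vec x,d(\vec x))\cup C(\vec x,f(\vec x))\vdash f$; otherwise let $N$ be the negation of $e_1(\vec x,f(\vec x))\vartriangleleft e_2(\vec x,f(\vec x))$ for a chosen inequality $e_1\vartriangleleft e_2$ of $C$ false at $(\vec r,f(\vec r))$, and go to the next-approximation step. If $q_{n+1}=1$: if $q_1r_1+\dots+q_nr_n+q=0$ return $D\cup C(\vec x,d(\vec x))\cup\{q_1x_1+\dots+q_nx_n+q=0\}\vdash d$; otherwise let $N$ be whichever of $q_1x_1+\dots+q_nx_n+q<0$, $0<q_1x_1+\dots+q_nx_n+q$ holds at $\vec r$, and go to the next-approximation step. Next approximation: write $C$ as $C'\cup\{x_{n+1}>a_i\}\cup\{x_{n+1}\ge a_i\}\cup\{x_{n+1}\le b_i\}_{1\le i\le m'}\cup\{x_{n+1}<b_i\}_{m'<i\le m}$ with $C',a_i,b_i$ not involving $x_{n+1}$; choose $j$ with $b_j(\vec r)\le b_i(\vec r)$ for all $i\le m$; replace $D$ by $D\cup C(\vec x,d(\vec x))\cup\{N\}\cup\{b_j\le b_i\mid1\le i\le m\}$ and $d$ by $e(\vec x,b_j(\vec x))$, and repeat the loop. For $\nu x_{n+1}.t'$ the algorithm is the order-dual (start from $d=1$, use the lower bounds $a_i$, choosing $a_j$ maximal at $\vec r$).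 *)

theory Defs
  imports Complex_Main
begin

text \<open>Variables are indexed from 0: Var i stands for x_(i+1). A term t(x_1,...,x_n)
is a term well-formed at level n. The binders Mu/Nu at level n bind the variable
with index n (i.e. x_(n+1)), so the body of a binder lives at level n+1.\<close>

datatype mterm =
    Var nat | Zero | One | Scal real mterm
  | Join mterm mterm | Meet mterm mterm
  | Oplus mterm mterm | Odot mterm mterm
  | Mu mterm | Nu mterm

fun wf_term :: "nat \<Rightarrow> mterm \<Rightarrow> bool" where
  "wf_term n (Var i) = (i < n)"
| "wf_term n Zero = True"
| "wf_term n One = True"
| "wf_term n (Scal c t) = (0 \<le> c \<and> c \<le> 1 \<and> wf_term n t)"
| "wf_term n (Join t1 t2) = (wf_term n t1 \<and> wf_term n t2)"
| "wf_term n (Meet t1 t2) = (wf_term n t1 \<and> wf_term n t2)"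
| "wf_term n (Oplus t1 t2) = (wf_term n t1 \<and> wf_term n t2)"
| "wf_term n (Odot t1 t2) = (wf_term n t1 \<and> wf_term n t2)"
| "wf_term n (Mu t) = wf_term (Suc n) t"
| "wf_term n (Nu t) = wf_term (Suc n) t"

fun sem :: "mterm \<Rightarrow> real list \<Rightarrow> real" where
  "sem (Var i) rs = rs ! i"
| "sem Zero rs = 0"
| "sem One rs = 1"
| "sem (Scal c t) rs = c * sem t rs"
| "sem (Join t1 t2) rs = max (sem t1 rs) (sem t2 rs)"
| "sem (Meet t1 t2) rs = min (sem t1 rs) (sem t2 rs)"
| "sem (Oplus t1 t2) rs = min (sem t1 rs + sem t2 rs) 1"
| "sem (Odot t1 t2) rs = max (sem t1 rs + sem t2 rs - 1) 0"
| "sem (Mu t) rs = (LEAST y. 0 \<le> y \<and> y \<le> 1 \<and> sem t (rs @ [y]) = y)"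
| "sem (Nu t) rs = (GREATEST y. 0 \<le> y \<and> y \<le> 1 \<and> sem t (rs @ [y]) = y)"

definition cube :: "nat \<Rightarrow> real list set" where
  "cube n = {r. length r = n \<and> set r \<subseteq> {0..1}}"

text \<open>A linear expression: coefficient function (coefficient of x_(i+1) at index i) and constant.\<close>
type_synonym lin = "(nat \<Rightarrow> real) \<times> real"

definition lev :: "lin \<Rightarrow> real list \<Rightarrow> real" where
  "lev e s = (\<Sum>i<length s. fst e i * s ! i) + snd e"

definition lconst :: "real \<Rightarrow> lin" where "lconst c = ((\<lambda>_. 0), c)"
definition lvar :: "nat \<Rightarrow> lin" where "lvar i = ((\<lambda>_. 0)(i := 1), 0)"
definition ladd :: "lin \<Rightarrow> lin \<Rightarrow> lin" where
  "ladd e1 e2 = ((\<lambda>i. fst e1 i + fst e2 i), snd e1 + snd e2)"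
definition lsub :: "lin \<Rightarrow> lin \<Rightarrow> lin" where
  "lsub e1 e2 = ((\<lambda>i. fst e1 i - fst e2 i), snd e1 - snd e2)"
definition lscale :: "real \<Rightarrow> lin \<Rightarrow> lin" where
  "lscale c e = ((\<lambda>i. c * fst e i), c * snd e)"

definition subst :: "nat \<Rightarrow> lin \<Rightarrow> lin \<Rightarrow> lin" where
  "subst n d e = ((\<lambda>i. if i = n then 0 else fst e i + fst e n * fst d i), snd e + fst e n * snd d)"

datatype cstr = Lt lin lin | Le lin lin

fun holds :: "real list \<Rightarrow> cstr \<Rightarrow> bool" where
  "holds s (Lt a b) = (lev a s < lev b s)"
| "holds s (Le a b) = (lev a s \<le> lev b s)"

definition holdsC :: "real list \<Rightarrow> cstr set \<Rightarrow> bool" where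
  "holdsC s C = (\<forall>c\<in>C. holds s c)"

fun substc :: "nat \<Rightarrow> lin \<Rightarrow> cstr \<Rightarrow> cstr" where
  "substc n d (Lt a b) = Lt (subst n d a) (subst n d b)"
| "substc n d (Le a b) = Le (subst n d a) (subst n d b)"

definition substC :: "nat \<Rightarrow> lin \<Rightarrow> cstr set \<Rightarrow> cstr set" where
  "substC n d C = substc n d ` C"

fun neg :: "cstr \<Rightarrow> cstr" where
  "neg (Lt a b) = Le b a"
| "neg (Le a b) = Lt b a"

fun cdiff :: "cstr \<Rightarrow> lin" where
  "cdiff (Lt a b) = lsub a b"
| "cdiff (Le a b) = lsub a b"

text \<open>A constraint e1 <| e2 whose difference e1 - e2 = a*x_(n+1) + g has a \<noteq> 0 is equivalent to
x_(n+1) <| -g/a (upper bound, a > 0) or x_(n+1) |> -g/a (lower bound, a < 0).\<close>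
definition bnd :: "nat \<Rightarrow> cstr \<Rightarrow> lin" where
  "bnd n c = lscale (- 1 / fst (cdiff c) n) ((fst (cdiff c))(n := 0), snd (cdiff c))"

definition upper :: "nat \<Rightarrow> cstr set \<Rightarrow> lin set" where
  "upper n C = {bnd n c | c. c \<in> C \<and> fst (cdiff c) n > 0}"

definition lower :: "nat \<Rightarrow> cstr set \<Rightarrow> lin set" where
  "lower n C = {bnd n c | c. c \<in> C \<and> fst (cdiff c) n < 0}"

definition range_c :: "nat \<Rightarrow> cstr set" where
  "range_c n = {Le (lconst 0) (lvar k) | k. k < n} \<union> {Le (lvar k) (lconst 1) | k. k < n}"

text \<open>Nondeterminism is modelled by returning the set of all outcomes of all runs;
a fuel parameter bounds the number of steps, None marks a run that ran out of fuel.\<close>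

definition obind :: "'a option set \<Rightarrow> ('a \<Rightarrow> 'b option set) \<Rightarrow> 'b option set" where
  "obind A f = (\<Union>x\<in>A. case x of None \<Rightarrow> {None} | Some a \<Rightarrow> f a)"

text \<open>One fixed-point check of the loop: Inl = return value, Inr N = continue with constraint N.\<close>
definition fp_check :: "nat \<Rightarrow> real list \<Rightarrow> cstr set \<Rightarrow> lin \<Rightarrow> cstr set \<Rightarrow> lin
    \<Rightarrow> ((cstr set \<times> lin) + cstr) set" where
  "fp_check n r D d C e =
    (let qn = fst e n; g = ((fst e)(n := 0), snd e) in
     if qn \<noteq> 1 then
       (let f = lscale (1 / (1 - qn)) g in
        if holdsC (r @ [lev f r]) C
        then {Inl (D \<union> substC n d C \<union> substC n f C, f)}
        else {Inr (neg (substc n f c)) | c. c \<in> C \<and> \<not> holds (r @ [lev f r]) c})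
     else if lev g r = 0
       then {Inl (D \<union> substC n d C \<union> {Le g (lconst 0), Le (lconst 0) g}, d)}
       else {Inr (if lev g r < 0 then Lt g (lconst 0) else Lt (lconst 0) g)})"

fun alg :: "nat \<Rightarrow> nat \<Rightarrow> mterm \<Rightarrow> real list \<Rightarrow> (cstr set \<times> lin) option set"
and loop_mu :: "nat \<Rightarrow> nat \<Rightarrow> mterm \<Rightarrow> real list \<Rightarrow> cstr set \<Rightarrow> lin \<Rightarrow> (cstr set \<times> lin) option set"
and loop_nu :: "nat \<Rightarrow> nat \<Rightarrow> mterm \<Rightarrow> real list \<Rightarrow> cstr set \<Rightarrow> lin \<Rightarrow> (cstr set \<times> lin) option set"
where
  "alg 0 n t r = {None}"
| "alg (Suc k) n (Var i) r = {Some (range_c n, lvar i)}"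
| "alg (Suc k) n Zero r = {Some (range_c n, lconst 0)}"
| "alg (Suc k) n One r = {Some (range_c n, lconst 1)}"
| "alg (Suc k) n (Scal c t) r = obind (alg k n t r) (\<lambda>(C, e). {Some (C, lscale c e)})"
| "alg (Suc k) n (Join t1 t2) r = obind (alg k n t1 r) (\<lambda>(C1, e1). obind (alg k n t2 r) (\<lambda>(C2, e2).
     if lev e1 r \<le> lev e2 r then {Some (C1 \<union> C2 \<union> {Le e1 e2}, e2)}
     else {Some (C1 \<union> C2 \<union> {Le e2 e1}, e1)}))"
| "alg (Suc k) n (Meet t1 t2) r = obind (alg k n t1 r) (\<lambda>(C1, e1). obind (alg k n t2 r) (\<lambda>(C2, e2).
     if lev e1 r \<le> lev e2 r then {Some (C1 \<union> C2 \<union> {Le e1 e2}, e1)}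
     else {Some (C1 \<union> C2 \<union> {Le e2 e1}, e2)}))"
| "alg (Suc k) n (Oplus t1 t2) r = obind (alg k n t1 r) (\<lambda>(C1, e1). obind (alg k n t2 r) (\<lambda>(C2, e2).
     if lev (ladd e1 e2) r \<le> 1 then {Some (C1 \<union> C2 \<union> {Le (ladd e1 e2) (lconst 1)}, ladd e1 e2)}
     else {Some (C1 \<union> C2 \<union> {Le (lconst 1) (ladd e1 e2)}, lconst 1)}))"
| "alg (Suc k) n (Odot t1 t2) r = obind (alg k n t1 r) (\<lambda>(C1, e1). obind (alg k n t2 r) (\<lambda>(C2, e2).
     if lev (ladd e1 e2) r \<le> 1 then {Some (C1 \<union> C2 \<union> {Le (ladd e1 e2) (lconst 1)}, lconst 0)}
     else {Some (C1 \<union> C2 \<union> {Le (lconst 1) (ladd e1 e2)}, lsub (ladd e1 e2) (lconst 1))}))"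
| "alg (Suc k) n (Mu t) r = loop_mu k n t r {} (lconst 0)"
| "alg (Suc k) n (Nu t) r = loop_nu k n t r {} (lconst 1)"
| "loop_mu 0 n t r D d = {None}"
| "loop_mu (Suc k) n t r D d = obind (alg k (Suc n) t (r @ [lev d r])) (\<lambda>(C, e).
     \<Union>x\<in>fp_check n r D d C e. (case x of
        Inl res \<Rightarrow> {Some res}
      | Inr N \<Rightarrow> (\<Union>b\<in>{b \<in> upper n C. \<forall>b'\<in>upper n C. lev b r \<le> lev b' r}.
           loop_mu k n t r (D \<union> substC n d C \<union> {N} \<union> {Le b b' | b'. b' \<in> upper n C})
             (subst n b e))))"
| "loop_nu 0 n t r D d = {None}"
| "loop_nu (Suc k) n t r D d = obind (alg k (Suc n) t (r @ [lev d r])) (\<lambda>(C, e).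
     \<Union>x\<in>fp_check n r D d C e. (case x of
        Inl res \<Rightarrow> {Some res}
      | Inr N \<Rightarrow> (\<Union>a\<in>{a \<in> lower n C. \<forall>a'\<in>lower n C. lev a' r \<le> lev a r}.
           loop_nu k n t r (D \<union> substC n d C \<union> {N} \<union> {Le a' a | a'. a' \<in> lower n C})
             (subst n a e))))"

definition results :: "nat \<Rightarrow> mterm \<Rightarrow> (cstr set \<times> lin) set" where
  "results n t = {res. \<exists>r k. r \<in> cube n \<and> Some res \<in> alg k n t r}"

definition represents :: "nat \<Rightarrow> (cstr set \<times> lin) set \<Rightarrow> (real list \<Rightarrow> real) \<Rightarrow> bool" where
  "represents n F f \<longleftrightarrow>
     (\<forall>r\<in>cube n. \<exists>(C, e)\<in>F. holdsC r C) \<and>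
     (\<forall>(C, e)\<in>F. \<forall>r\<in>cube n. holdsC r C \<longrightarrow> lev e r = f r)"

end

theory Submission
  imports Defs
begin

text \<open>
  The proof is by induction on the term, carrying the invariant \<open>alg_correct\<close>: every result of
  every run is sound, all runs halt once the fuel exceeds a bound that does not depend on the
  input, and only finitely many results occur. The connectives merely add the constraint that
  selects the active linear piece. For \<open>\<mu>x. t\<close> the loop keeps an approximant \<open>d\<close> that stays
  below the least fixed point on the whole region described by the accumulated constraints; \<open>\<nu>\<close>
  is the same argument for the reversed order. If the current linear piece of the body has no
  fixed point on its region \<open>C\<close>, the body lies strictly above the diagonal there, so its value at
  the upper end of \<open>C\<close> is a better approximant that is still below the fixed point and lies
  beyond \<open>C\<close>. Hence no result of the body is used twice; since the body has only finitely many
  results, the loop terminates, and everything it produces comes from a finite pool.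
\<close>

section \<open>Linear expressions and constraints\<close>

definition lin_rest :: "nat \<Rightarrow> lin \<Rightarrow> lin" where
  "lin_rest n e = ((fst e)(n := 0), snd e)"

lemma lev_snoc: "length s = n \<Longrightarrow> lev e (s @ [y]) = fst e n * y + lev (lin_rest n e) s"
  by (simp add: lev_def nth_append lin_rest_def)

lemma lev_subst: "length s = n \<Longrightarrow> lev (subst n d e) s = lev e (s @ [lev d s])"
  by (subst lev_snoc[OF refl]) (simp add: lev_def subst_def lin_rest_def sum.distrib sum_distrib_left algebra_simps)

lemma holds_substc: "length s = n \<Longrightarrow> holds s (substc n d c) \<longleftrightarrow> holds (s @ [lev d s]) c"
  by (cases c) (auto simp: lev_subst)

lemma holdsC_substC: "length s = n \<Longrightarrow> holdsC s (substC n d C) \<longleftrightarrow> holdsC (s @ [lev d s]) C"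
  by (auto simp: holdsC_def substC_def holds_substc)

lemma lev_lconst [simp]: "lev (lconst c) s = c"
  by (simp add: lev_def lconst_def)

lemma lev_lvar [simp]: "i < length s \<Longrightarrow> lev (lvar i) s = s ! i"
  by (simp add: lev_def lvar_def if_distrib[of "\<lambda>x. x * _"] cong: if_cong)

lemma lev_ladd [simp]: "lev (ladd a b) s = lev a s + lev b s"
  by (simp add: lev_def ladd_def sum.distrib algebra_simps)

lemma lev_lsub [simp]: "lev (lsub a b) s = lev a s - lev b s"
  by (simp add: lev_def lsub_def sum_subtractf algebra_simps)

lemma lev_lscale [simp]: "lev (lscale c a) s = c * lev a s"
  by (simp add: lev_def lscale_def sum_distrib_left algebra_simps)

lemma holds_neg [simp]: "holds s (neg c) \<longleftrightarrow> \<not> holds s c"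
  by (cases c) auto

lemma holdsC_Un [simp]: "holdsC s (A \<union> B) \<longleftrightarrow> holdsC s A \<and> holdsC s B"
  and holdsC_insert [simp]: "holdsC s (insert c A) \<longleftrightarrow> holds s c \<and> holdsC s A"
  and holdsC_empty [simp]: "holdsC s {}"
  by (auto simp: holdsC_def)

lemma holdsC_image: "holdsC s (f ` X) \<longleftrightarrow> (\<forall>x\<in>X. holds s (f x))"
  by (auto simp: holdsC_def)

lemma holdsC_mono: "holdsC s B \<Longrightarrow> A \<subseteq> B \<Longrightarrow> holdsC s A"
  by (auto simp: holdsC_def)

lemma range_c_image:
  "range_c n = (\<lambda>k. Le (lconst 0) (lvar k)) ` {..<n} \<union> (\<lambda>k. Le (lvar k) (lconst 1)) ` {..<n}"
  by (auto simp: range_c_def)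

lemma finite_range_c: "finite (range_c n)"
  by (simp add: range_c_image)

lemma cube_length: "s \<in> cube n \<Longrightarrow> length s = n"
  by (simp add: cube_def)

lemma cube_nth: "s \<in> cube m \<Longrightarrow> i < m \<Longrightarrow> s ! i \<in> {0..1}"
  using nth_mem by (fastforce simp: cube_def)

lemma snoc_in_cube_iff: "s @ [y] \<in> cube (Suc n) \<longleftrightarrow> s \<in> cube n \<and> y \<in> {0..1}"
  by (auto simp: cube_def)

lemma holdsC_range_c_iff:
  assumes "length s = n" shows "holdsC s (range_c n) \<longleftrightarrow> s \<in> cube n"
proof -
  have "holdsC s (range_c n) \<longleftrightarrow> (\<forall>k<n. 0 \<le> s ! k \<and> s ! k \<le> 1)"
    using assms by (auto simp: range_c_image holdsC_image)
  also have "\<dots> \<longleftrightarrow> s \<in> cube n"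
    using assms by (auto simp: cube_def set_conv_nth)
  finally show ?thesis .
qed

lemma range_c_subst: "range_c n \<subseteq> substC n d (range_c (Suc n))"
proof
  fix c assume "c \<in> range_c n"
  then obtain k where "k < n" and c: "c = Le (lconst 0) (lvar k) \<or> c = Le (lvar k) (lconst 1)"
    by (auto simp: range_c_def)
  then have "c \<in> range_c (Suc n)" and "substc n d c = c"
    by (auto simp: range_c_def subst_def lvar_def lconst_def fun_eq_iff)
  then show "c \<in> substC n d (range_c (Suc n))"
    unfolding substC_def by (metis image_eqI)
qed

section \<open>Constraints as bounds on the last variable\<close>

text \<open>A \<open>\<nu>\<close>-loop is a \<open>\<mu>\<close>-loop for the reversed order: \<open>orient up\<close> turns the direction in which
  the approximants move into the usual order of the reals, so one argument serves both binders.\<close>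

definition orient :: "bool \<Rightarrow> real \<Rightarrow> real" where
  "orient up x = (if up then x else - x)"

lemma orient_simps [simp]: "orient True x = x" "orient False x = - x"
  by (simp_all add: orient_def)

definition bounds :: "bool \<Rightarrow> nat \<Rightarrow> cstr set \<Rightarrow> lin set" where
  "bounds up = (if up then upper else lower)"

lemma bounds_eq: "bounds up n C = {bnd n c | c. c \<in> C \<and> 0 < orient up (fst (cdiff c) n)}"
  by (cases up) (auto simp: bounds_def upper_def lower_def)

lemma finite_bounds: "finite C \<Longrightarrow> finite (bounds up n C)"
  unfolding bounds_eq by (rule finite_subset[of _ "bnd n ` C"]) auto

lemma holds_snoc_affine:
  fixes s :: "real list" and c :: cstr
  assumes "length s = n"
  defines "a \<equiv> fst (cdiff c) n" and "g \<equiv> lev (lin_rest n (cdiff c)) s"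
  shows "holds (s @ [y]) c \<longleftrightarrow> (case c of Lt _ _ \<Rightarrow> a * y + g < 0 | Le _ _ \<Rightarrow> a * y + g \<le> 0)"
    and "lev (bnd n c) s = - g / a"
proof -
  have "lev (cdiff c) (s @ [y]) = a * y + g"
    using assms by (simp add: lev_snoc)
  then show "holds (s @ [y]) c \<longleftrightarrow> (case c of Lt _ _ \<Rightarrow> a * y + g < 0 | Le _ _ \<Rightarrow> a * y + g \<le> 0)"
    by (cases c) auto
  show "lev (bnd n c) s = - g / a"
    by (simp add: bnd_def a_def g_def lin_rest_def)
qed

lemma holds_snoc_bnd:
  assumes "length s = n" and pos: "0 < orient up (fst (cdiff c) n)"
  shows holds_snoc_le_bnd: "holds (s @ [y]) c \<Longrightarrow> orient up y \<le> orient up (lev (bnd n c) s)"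
    and holds_snoc_if_lt_bnd: "orient up y < orient up (lev (bnd n c) s) \<Longrightarrow> holds (s @ [y]) c"
  using pos unfolding holds_snoc_affine[OF assms(1)]
  by (cases up; cases c; auto simp: field_simps)+

lemma holds_snoc_mono:
  assumes "length s = n" and "orient up (fst (cdiff c) n) \<le> 0"
    and "holds (s @ [x]) c" and "orient up x \<le> orient up y"
  shows "holds (s @ [y]) c"
proof -
  have "fst (cdiff c) n * y \<le> fst (cdiff c) n * x"
    using assms(2,4) by (cases up) (auto intro: mult_left_mono_neg mult_left_mono)
  then show ?thesis
    using assms(3) unfolding holds_snoc_affine[OF assms(1)] by (cases c) auto
qed

lemma holdsC_snoc_le_bounds:
  "length s = n \<Longrightarrow> holdsC (s @ [y]) C \<Longrightarrow> b \<in> bounds up n C \<Longrightarrow> orient up y \<le> orient up (lev b s)"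
  by (auto simp: bounds_eq holdsC_def intro: holds_snoc_le_bnd)

lemma holdsC_snoc_below_bounds:
  assumes "length s = n" and "holdsC (s @ [x]) C" and "orient up x \<le> orient up y"
    and "\<forall>b\<in>bounds up n C. orient up y < orient up (lev b s)"
  shows "holdsC (s @ [y]) C"
  unfolding holdsC_def
proof
  fix c assume "c \<in> C"
  show "holds (s @ [y]) c"
  proof (cases "0 < orient up (fst (cdiff c) n)")
    case True
    with \<open>c \<in> C\<close> have "bnd n c \<in> bounds up n C" by (auto simp: bounds_eq)
    with assms(4) show ?thesis by (blast intro: holds_snoc_if_lt_bnd[OF assms(1) True])
  next
    case False
    have "holds (s @ [x]) c"
      using \<open>c \<in> C\<close> assms(2) by (auto simp: holdsC_def)
    with False show ?thesis
      using holds_snoc_mono[OF assms(1)] assms(3) by (meson not_less)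
  qed
qed

lemma holdsC_snoc_between:
  assumes "length s = n" and "holdsC (s @ [x]) C" and "holdsC (s @ [z]) C"
    and "x \<le> y" and "y \<le> z"
  shows "holdsC (s @ [y]) C"
  unfolding holdsC_def
proof
  fix c assume "c \<in> C"
  then have "holds (s @ [x]) c" "holds (s @ [z]) c"
    using assms(2,3) by (auto simp: holdsC_def)
  then show "holds (s @ [y]) c"
    using holds_snoc_mono[OF assms(1), of True c x y] holds_snoc_mono[OF assms(1), of False c z y] assms(4,5)
    by fastforce
qed

lemma holdsC_snoc_between_orient:
  assumes "length s = n" and "holdsC (s @ [x]) C" and "holdsC (s @ [z]) C"
    and "orient up x \<le> orient up y" and "orient up y \<le> orient up z"
  shows "holdsC (s @ [y]) C"
  using assms holdsC_snoc_between[OF assms(1,2,3)] holdsC_snoc_between[OF assms(1,3,2)]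
  by (cases up) auto

lemma bounds_nonempty: "range_c (Suc n) \<subseteq> C \<Longrightarrow> bounds up n C \<noteq> {}"
proof -
  assume "range_c (Suc n) \<subseteq> C"
  then have "Le (lvar n) (lconst 1) \<in> C" "Le (lconst 0) (lvar n) \<in> C"
    by (auto simp: range_c_def)
  moreover have "fst (cdiff (Le (lvar n) (lconst 1))) n = 1" "fst (cdiff (Le (lconst 0) (lvar n))) n = - 1"
    by (simp_all add: lsub_def lvar_def lconst_def)
  ultimately obtain c where "c \<in> C" "0 < orient up (fst (cdiff c) n)"
    by (cases up) force+
  then show ?thesis
    unfolding bounds_eq by blast
qed

lemma holdsC_snoc_unit_interval:
  "s \<in> cube n \<Longrightarrow> range_c (Suc n) \<subseteq> C \<Longrightarrow> holdsC (s @ [y]) C \<Longrightarrow> y \<in> {0..1}"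
  using holdsC_range_c_iff[of "s @ [y]" "Suc n"] snoc_in_cube_iff
  by (auto simp: cube_length intro: holdsC_mono)

section \<open>Monotonicity and fixed points of the semantics\<close>

lemma least_fixpoint_unit_interval:
  fixes F :: "real \<Rightarrow> real"
  assumes mono: "\<And>x y. 0 \<le> x \<Longrightarrow> x \<le> y \<Longrightarrow> y \<le> 1 \<Longrightarrow> F x \<le> F y"
    and into: "\<And>x. x \<in> {0..1} \<Longrightarrow> F x \<in> {0..1}"
  defines "m \<equiv> LEAST y. 0 \<le> y \<and> y \<le> 1 \<and> F y = y"
  shows "m \<in> {0..1}" and "F m = m" and "\<And>y. y \<in> {0..1} \<Longrightarrow> F y \<le> y \<Longrightarrow> m \<le> y"
proof -
  define S where "S = {y \<in> {0..1}. F y \<le> y}"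
  have "1 \<in> S" using into[of 1] by (auto simp: S_def)
  then have S: "S \<noteq> {}" "bdd_below S"
    by (auto simp: S_def intro: bdd_belowI[of _ 0])
  have lower: "Inf S \<le> y" if "y \<in> S" for y
    using S that by (simp add: cInf_lower)
  have unit: "Inf S \<in> {0..1}"
    using lower[OF \<open>1 \<in> S\<close>] S by (auto simp: S_def intro: cInf_greatest)
  have "F (Inf S) \<le> y" if "y \<in> S" for y
    using mono[of "Inf S" y] unit lower[OF that] that by (force simp: S_def)
  then have pre: "F (Inf S) \<le> Inf S"
    using S by (intro cInf_greatest) auto
  then have "F (Inf S) \<in> S"
    using into[OF unit] mono[of "F (Inf S)" "Inf S"] unit by (auto simp: S_def)
  with pre have fixed: "F (Inf S) = Inf S"
    using lower by fastforce
  have "m = Inf S"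
    unfolding m_def by (rule Least_equality) (use unit fixed lower in \<open>auto simp: S_def\<close>)
  with unit fixed lower show "m \<in> {0..1}" "F m = m" "\<And>y. y \<in> {0..1} \<Longrightarrow> F y \<le> y \<Longrightarrow> m \<le> y"
    by (auto simp: S_def)
qed

lemma greatest_fixpoint_unit_interval:
  fixes F :: "real \<Rightarrow> real"
  assumes mono: "\<And>x y. 0 \<le> x \<Longrightarrow> x \<le> y \<Longrightarrow> y \<le> 1 \<Longrightarrow> F x \<le> F y"
    and into: "\<And>x. x \<in> {0..1} \<Longrightarrow> F x \<in> {0..1}"
  defines "m \<equiv> GREATEST y. 0 \<le> y \<and> y \<le> 1 \<and> F y = y"
  shows "m \<in> {0..1}" and "F m = m" and "\<And>y. y \<in> {0..1} \<Longrightarrow> y \<le> F y \<Longrightarrow> y \<le> m"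
proof -
  define G where "G y = 1 - F (1 - y)" for y
  define l where "l = (LEAST y. 0 \<le> y \<and> y \<le> 1 \<and> G y = y)"
  have G_mono: "G x \<le> G y" if "0 \<le> x" "x \<le> y" "y \<le> 1" for x y
    using mono[of "1 - y" "1 - x"] that by (simp add: G_def)
  have G_into: "G x \<in> {0..1}" if "x \<in> {0..1}" for x
    using into[of "1 - x"] that by (simp add: G_def)
  note l = least_fixpoint_unit_interval[of G, OF G_mono G_into, folded l_def]
  have fixed: "F (1 - l) = 1 - l"
    using l(2) by (simp add: G_def)
  have post: "y \<le> 1 - l" if "y \<in> {0..1}" "y \<le> F y" for y
    using l(3)[of "1 - y"] that by (simp add: G_def)
  have "m = 1 - l"
    unfolding m_def by (rule Greatest_equality) (use l(1) fixed post in auto)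
  with l(1) fixed post show "m \<in> {0..1}" "F m = m" "\<And>y. y \<in> {0..1} \<Longrightarrow> y \<le> F y \<Longrightarrow> y \<le> m"
    by auto
qed

definition unit_monotone :: "nat \<Rightarrow> (real list \<Rightarrow> real) \<Rightarrow> bool" where
  "unit_monotone m f \<longleftrightarrow> (\<forall>s\<in>cube m. f s \<in> {0..1})
     \<and> (\<forall>s\<in>cube m. \<forall>s'\<in>cube m. list_all2 (\<le>) s s' \<longrightarrow> f s \<le> f s')"

lemma unit_monotone_combine:
  assumes "unit_monotone m f" and "unit_monotone m g" and "\<And>s. F s = h (f s) (g s)"
    and "\<And>a b. a \<in> {0..1} \<Longrightarrow> b \<in> {0..1} \<Longrightarrow> h a b \<in> {0..1}"
    and "\<And>a b a' b'. a \<le> a' \<Longrightarrow> b \<le> b' \<Longrightarrow> h a b \<le> h a' b'"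
  shows "unit_monotone m F"
  using assms unfolding unit_monotone_def by simp

lemma unit_monotone_scale:
  assumes "unit_monotone m f" and "c \<in> {0..1}"
  shows "unit_monotone m (\<lambda>s. c * f s)"
  unfolding unit_monotone_def
proof (intro conjI ballI impI)
  fix s assume "s \<in> cube m"
  then have "f s \<in> {0..1}"
    using assms(1) by (simp add: unit_monotone_def)
  then show "c * f s \<in> {0..1}"
    using assms(2) mult_le_one[of c "f s"] by auto
next
  fix s s' assume "s \<in> cube m" "s' \<in> cube m" "list_all2 (\<le>) s s'"
  then have "f s \<le> f s'"
    using assms(1) by (simp add: unit_monotone_def)
  then show "c * f s \<le> c * f s'"
    using assms(2) mult_left_mono[of "f s" "f s'" c] by simp
qed

lemma unit_monotone_snoc:
  assumes "unit_monotone (Suc m) f" and "s \<in> cube m"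
  shows unit_monotone_snoc_into: "y \<in> {0..1} \<Longrightarrow> f (s @ [y]) \<in> {0..1}"
    and unit_monotone_snoc_mono: "0 \<le> x \<Longrightarrow> x \<le> y \<Longrightarrow> y \<le> 1 \<Longrightarrow> f (s @ [x]) \<le> f (s @ [y])"
  using assms by (auto simp: unit_monotone_def snoc_in_cube_iff list_all2_append list.rel_refl)

definition fixpoint_term :: "bool \<Rightarrow> mterm \<Rightarrow> mterm" where
  "fixpoint_term up T = (if up then Mu T else Nu T)"

lemma sem_fixpoint_term:
  fixes up :: bool
  assumes "unit_monotone (Suc m) (sem T)" and "s \<in> cube m"
  defines "\<phi> \<equiv> sem (fixpoint_term up T) s"
  shows "\<phi> \<in> {0..1}" and "sem T (s @ [\<phi>]) = \<phi>"
    and "\<And>y. y \<in> {0..1} \<Longrightarrow> orient up (sem T (s @ [y])) \<le> orient up y \<Longrightarrow> orient up \<phi> \<le> orient up y"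
  using least_fixpoint_unit_interval[of "\<lambda>y. sem T (s @ [y])"]
    greatest_fixpoint_unit_interval[of "\<lambda>y. sem T (s @ [y])"]
    unit_monotone_snoc[OF assms(1,2)]
  unfolding \<phi>_def fixpoint_term_def by (cases up; simp)+

lemma unit_monotone_fixpoint_term:
  assumes mono: "unit_monotone (Suc m) (sem T)"
  shows "unit_monotone m (sem (fixpoint_term up T))"
  unfolding unit_monotone_def
proof (intro conjI ballI impI)
  fix s assume "s \<in> cube m"
  then show "sem (fixpoint_term up T) s \<in> {0..1}" by (rule sem_fixpoint_term[OF mono])
next
  fix s s' assume s: "s \<in> cube m" and s': "s' \<in> cube m" and le: "list_all2 (\<le>) s s'"
  have F_le: "sem T (s @ [y]) \<le> sem T (s' @ [y])" if "y \<in> {0..1}" for y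
  proof -
    have "list_all2 (\<le>) (s @ [y]) (s' @ [y])"
      using le by (simp add: list_all2_appendI)
    then show ?thesis
      using mono s s' that by (simp add: unit_monotone_def snoc_in_cube_iff)
  qed
  note fp = sem_fixpoint_term[OF mono s, where up = up]
    and fp' = sem_fixpoint_term[OF mono s', where up = up]
  show "sem (fixpoint_term up T) s \<le> sem (fixpoint_term up T) s'"
  proof (cases up)
    case True
    then show ?thesis
      using fp(3)[of "sem (fixpoint_term up T) s'"] fp'(1,2) F_le[of "sem (fixpoint_term up T) s'"] by simp
  next
    case False
    then show ?thesis
      using fp'(3)[of "sem (fixpoint_term up T) s"] fp(1,2) F_le[of "sem (fixpoint_term up T) s"] by simp
  qed
qed

lemma sem_unit_monotone: "wf_term m t \<Longrightarrow> unit_monotone m (sem t)"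
proof (induction t arbitrary: m)
  case (Var i)
  then show ?case
    using cube_nth by (auto simp: unit_monotone_def list_all2_conv_all_nth cube_length)
next
  case (Scal c t)
  have "unit_monotone m (\<lambda>s. c * sem t s)"
    by (rule unit_monotone_scale) (use Scal in auto)
  moreover have "sem (Scal c t) = (\<lambda>s. c * sem t s)"
    by (simp add: fun_eq_iff)
  ultimately show ?case by simp
next
  case (Join t1 t2)
  show ?case
    by (rule unit_monotone_combine[of m "sem t1" "sem t2" _ max]) (use Join in auto)
next
  case (Meet t1 t2)
  show ?case
    by (rule unit_monotone_combine[of m "sem t1" "sem t2" _ min]) (use Meet in auto)
next
  case (Oplus t1 t2)
  show ?case
    by (rule unit_monotone_combine[of m "sem t1" "sem t2" _ "\<lambda>a b. min (a + b) 1"]) (use Oplus in auto)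
next
  case (Odot t1 t2)
  show ?case
    by (rule unit_monotone_combine[of m "sem t1" "sem t2" _ "\<lambda>a b. max (a + b - 1) 0"]) (use Odot in auto)
next
  case (Mu t)
  then have "unit_monotone (Suc m) (sem t)" by simp
  then show ?case
    using unit_monotone_fixpoint_term[of m t True] by (simp only: fixpoint_term_def if_True)
next
  case (Nu t)
  then have "unit_monotone (Suc m) (sem t)" by simp
  then show ?case
    using unit_monotone_fixpoint_term[of m t False] by (simp only: fixpoint_term_def if_False)
qed (auto simp: unit_monotone_def)

section \<open>One approximation step\<close>

lemma affine_le_at_right_end:
  fixes a b q c M :: real
  assumes "a < b" and "\<And>y. a \<le> y \<Longrightarrow> y < b \<Longrightarrow> q * y + c \<le> M"
  shows "q * b + c \<le> M"
proof (rule tendsto_upperbound)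
  show "((\<lambda>y. q * y + c) \<longlongrightarrow> q * b + c) (at_left b)"
    by (intro tendsto_intros)
  show "\<forall>\<^sub>F y in at_left b. q * y + c \<le> M"
    using eventually_at_left_real[OF assms(1)] by eventually_elim (use assms(2) in auto)
qed simp

text \<open>On \<open>H\<close> the monotone map \<open>F\<close> is affine without fixed point, hence strictly above the diagonal
  below \<open>\<mu>\<close>; so its value at the right end \<open>b\<close> of the interval lies beyond \<open>H\<close> and, by monotonicity,
  still below \<open>\<mu>\<close>.\<close>

lemma lfp_affine_step:
  fixes F :: "real \<Rightarrow> real" and I H :: "real set"
  assumes mono: "\<And>x y. x \<in> I \<Longrightarrow> y \<in> I \<Longrightarrow> x \<le> y \<Longrightarrow> F x \<le> F y"
    and lfp: "\<mu> \<in> I" "F \<mu> = \<mu>" "\<And>y. y \<in> I \<Longrightarrow> F y \<le> y \<Longrightarrow> \<mu> \<le> y"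
    and H: "H \<subseteq> I" "d \<in> H" "d \<le> \<mu>"
    and bounded: "\<And>y. y \<in> H \<Longrightarrow> y \<le> b" and interval: "\<And>y. d \<le> y \<Longrightarrow> y < b \<Longrightarrow> y \<in> H"
    and affine: "\<And>y. y \<in> H \<Longrightarrow> F y = q * y + c" and nofix: "\<And>y. y \<in> H \<Longrightarrow> F y \<noteq> y"
  shows "d < q * b + c" and "q * b + c \<le> \<mu>" and "\<And>y. y \<in> H \<Longrightarrow> y < q * b + c"
proof -
  have "b \<le> \<mu>"
    using interval[of \<mu>] nofix[of \<mu>] lfp(2) H(3) by force
  have below_F: "y < F y" if "y \<in> H" "y < \<mu>" for y
    using lfp(3)[of y] that H(1) by force
  have below_lfp: "F y \<le> \<mu>" if "y \<in> H" "y \<le> \<mu>" for y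
    using mono[of y \<mu>] lfp(1,2) that H(1) by auto
  have "d < q * b + c \<and> b \<le> q * b + c \<and> q * b + c \<le> \<mu>"
  proof (cases "d < b")
    case True
    have "q * y + c \<le> \<mu>" if "d \<le> y" "y < b" for y
      using below_lfp[of y] interval[OF that] affine[of y] that \<open>b \<le> \<mu>\<close> by simp
    then have "q * b + c \<le> \<mu>"
      by (rule affine_le_at_right_end[OF True])
    moreover have "(1 - q) * y + - c \<le> 0" if "d \<le> y" "y < b" for y
      using below_F[of y] interval[OF that] affine[of y] that \<open>b \<le> \<mu>\<close> by (simp add: algebra_simps)
    then have "(1 - q) * b + - c \<le> 0"
      by (rule affine_le_at_right_end[OF True])
    ultimately show ?thesis
      using True by (simp add: algebra_simps)
  next
    case False
    then have "b = d"
      using bounded[OF H(2)] by simp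
    moreover have "d \<noteq> \<mu>"
      using nofix[OF H(2)] lfp(2) by auto
    with H(3) have "d < \<mu>"
      by simp
    ultimately show ?thesis
      using below_F[OF H(2)] below_lfp[OF H(2)] affine[OF H(2)] by simp
  qed
  then show "d < q * b + c" "q * b + c \<le> \<mu>"
    by simp_all
  show "y < q * b + c" if "y \<in> H" for y
  proof (rule ccontr)
    assume "\<not> y < q * b + c"
    with \<open>d < q * b + c \<and> b \<le> q * b + c \<and> q * b + c \<le> \<mu>\<close> bounded[OF that]
    have "y = b" "y = q * b + c"
      by auto
    with affine[OF that] nofix[OF that] show False
      by simp
  qed
qed

lemma extremal_fixpoint_affine_step:
  fixes F :: "real \<Rightarrow> real" and H :: "real set"
  assumes mono: "\<And>x y. 0 \<le> x \<Longrightarrow> x \<le> y \<Longrightarrow> y \<le> 1 \<Longrightarrow> F x \<le> F y"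
    and fp: "\<phi> \<in> {0..1}" "F \<phi> = \<phi>"
      "\<And>y. y \<in> {0..1} \<Longrightarrow> orient up (F y) \<le> orient up y \<Longrightarrow> orient up \<phi> \<le> orient up y"
    and H: "H \<subseteq> {0..1}" "d \<in> H" "orient up d \<le> orient up \<phi>"
    and bounded: "\<And>y. y \<in> H \<Longrightarrow> orient up y \<le> orient up b"
    and interval: "\<And>y. orient up d \<le> orient up y \<Longrightarrow> orient up y < orient up b \<Longrightarrow> y \<in> H"
    and affine: "\<And>y. y \<in> H \<Longrightarrow> F y = q * y + c" and nofix: "\<And>y. y \<in> H \<Longrightarrow> F y \<noteq> y"
  shows "orient up d < orient up (q * b + c)" and "orient up (q * b + c) \<le> orient up \<phi>"
    and "\<And>y. y \<in> H \<Longrightarrow> orient up y < orient up (q * b + c)"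
proof -
  have "orient up d < orient up (q * b + c) \<and> orient up (q * b + c) \<le> orient up \<phi>
    \<and> (\<forall>y\<in>H. orient up y < orient up (q * b + c))"
  proof (cases up)
    case True
    then show ?thesis
      using lfp_affine_step[of "{0..1}" F \<phi> H d b q c] assms by auto
  next
    case False
    let ?G = "\<lambda>y. - F (- y)"
    have G_mono: "?G x \<le> ?G y" if "x \<in> uminus ` {0..1}" "y \<in> uminus ` {0..1}" "x \<le> y" for x y
      using that mono[of "- y" "- x"] by auto
    have G_lfp: "- \<phi> \<in> uminus ` {0..1}" "?G (- \<phi>) = - \<phi>"
      using fp(1,2) by auto
    have G_least: "- \<phi> \<le> y" if "y \<in> uminus ` {0..1}" "?G y \<le> y" for y
      using that fp(3)[of "- y"] False by force
    have H': "uminus ` H \<subseteq> uminus ` {0..1}" "- d \<in> uminus ` H" "- d \<le> - \<phi>"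
      using H False by auto
    have H'_bounded: "y \<le> - b" if "y \<in> uminus ` H" for y
      using that bounded False by force
    have H'_interval: "y \<in> uminus ` H" if "- d \<le> y" "y < - b" for y
      using that interval[of "- y"] False by force
    have G_affine: "?G y = q * y + - c" if "y \<in> uminus ` H" for y
      using that affine by force
    have G_nofix: "?G y \<noteq> y" if "y \<in> uminus ` H" for y
      using that nofix by force
    note reflected = lfp_affine_step[OF G_mono G_lfp G_least H' H'_bounded H'_interval G_affine G_nofix]
    have "\<forall>y\<in>H. - y < q * - b + - c"
      using reflected(3) by blast
    with reflected(1,2) show ?thesis
      using False by (simp add: algebra_simps)
  qed
  then show "orient up d < orient up (q * b + c)" "orient up (q * b + c) \<le> orient up \<phi>"
    "\<And>y. y \<in> H \<Longrightarrow> orient up y < orient up (q * b + c)"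
    by auto
qed

section \<open>Correctness of the algorithm\<close>

definition halting :: "'a option set \<Rightarrow> bool" where
  "halting A \<longleftrightarrow> None \<notin> A \<and> A \<noteq> {}"

lemma obind_Some: "Some b \<in> obind A f \<longleftrightarrow> (\<exists>a. Some a \<in> A \<and> Some b \<in> f a)"
  by (auto simp: obind_def split: option.splits)

lemma halting_obind: "halting A \<Longrightarrow> (\<And>a. Some a \<in> A \<Longrightarrow> halting (f a)) \<Longrightarrow> halting (obind A f)"
  unfolding halting_def obind_def by (fastforce split: option.splits elim: option.exhaust_sel)

lemma halting_Some [simp]: "halting {Some a}"
  by (simp add: halting_def)

lemma halting_UN: "X \<noteq> {} \<Longrightarrow> (\<And>x. x \<in> X \<Longrightarrow> halting (f x)) \<Longrightarrow> halting (\<Union>x\<in>X. f x)"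
  by (auto simp: halting_def)

lemma halting_SomeE:
  assumes "halting A"
  obtains a where "Some a \<in> A"
  using assms unfolding halting_def by (metis ex_in_conv option.exhaust)

lemma alg_Some_Suc: "Some res \<in> alg k n t r \<Longrightarrow> \<exists>k'. k = Suc k'"
  by (cases k) auto

definition sound_result :: "nat \<Rightarrow> mterm \<Rightarrow> real list \<Rightarrow> cstr set \<Rightarrow> lin \<Rightarrow> bool" where
  "sound_result n t r C e \<longleftrightarrow> holdsC r C \<and> finite C \<and> range_c n \<subseteq> C
     \<and> (\<forall>s. length s = n \<longrightarrow> holdsC s C \<longrightarrow> lev e s = sem t s)"

lemma sound_result_in_cube:
  "sound_result n t r C e \<Longrightarrow> length s = n \<Longrightarrow> holdsC s C \<Longrightarrow> s \<in> cube n"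
  using holdsC_range_c_iff holdsC_mono by (auto simp: sound_result_def)

text \<open>The fuel bound must not depend on the input: a fixed-point loop runs its body at inputs it
  computes itself.\<close>

definition alg_correct :: "nat \<Rightarrow> mterm \<Rightarrow> bool" where
  "alg_correct n t \<longleftrightarrow> (\<forall>r\<in>cube n. \<forall>k C e. Some (C, e) \<in> alg k n t r \<longrightarrow> sound_result n t r C e)
     \<and> (\<exists>K. \<forall>r\<in>cube n. \<forall>k\<ge>K. halting (alg k n t r)) \<and> finite (results n t)"

lemma alg_correctD:
  assumes "alg_correct n t"
  shows alg_correct_sound: "r \<in> cube n \<Longrightarrow> Some (C, e) \<in> alg k n t r \<Longrightarrow> sound_result n t r C e"
    and alg_correct_halting: "\<exists>K. \<forall>r\<in>cube n. \<forall>k\<ge>K. halting (alg k n t r)"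
    and alg_correct_finite: "finite (results n t)"
  using assms unfolding alg_correct_def by blast+

lemma alg_correct_atom:
  assumes alg_Suc: "\<And>k r. alg (Suc k) n T r = {Some (range_c n, E)}"
    and correct: "\<And>s. s \<in> cube n \<Longrightarrow> lev E s = sem T s"
  shows "alg_correct n T"
proof -
  have res: "res = (range_c n, E)" if "Some res \<in> alg k n T r" for k r res
    using that alg_Suc alg_Some_Suc[OF that] by auto
  have sound: "sound_result n T r (range_c n) E" if "r \<in> cube n" for r
    using that correct holdsC_range_c_iff[OF cube_length[OF that]] holdsC_range_c_iff
    by (auto simp: sound_result_def finite_range_c)
  have "results n T \<subseteq> {(range_c n, E)}"
    using res by (auto simp: results_def)
  then have "finite (results n T)"
    by (rule finite_subset) simp
  moreover have "halting (alg k n T r)" if "1 \<le> k" for k r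
    using that alg_Suc by (cases k) auto
  moreover have "sound_result n T r C e" if "r \<in> cube n" "Some (C, e) \<in> alg k n T r" for r k C e
    using sound[OF that(1)] res[OF that(2)] by simp
  ultimately show ?thesis
    unfolding alg_correct_def by blast
qed

lemma alg_correct_Scal:
  assumes IH: "alg_correct n t"
  shows "alg_correct n (Scal c t)"
proof -
  have alg_Scal: "Some (C, e) \<in> alg k n (Scal c t) r \<longleftrightarrow>
      (\<exists>k' e'. k = Suc k' \<and> Some (C, e') \<in> alg k' n t r \<and> e = lscale c e')" for k r C e
    by (cases k) (auto simp: obind_Some)
  obtain K where K: "\<forall>r\<in>cube n. \<forall>k\<ge>K. halting (alg k n t r)"
    using alg_correct_halting[OF IH] by blast
  have "sound_result n (Scal c t) r C e" if r: "r \<in> cube n" and run: "Some (C, e) \<in> alg k n (Scal c t) r"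
    for r k C e
  proof -
    obtain k' e' where "Some (C, e') \<in> alg k' n t r" and e: "e = lscale c e'"
      using run unfolding alg_Scal by blast
    with alg_correct_sound[OF IH r] show ?thesis
      by (simp add: sound_result_def)
  qed
  moreover have "halting (alg k n (Scal c t) r)" if r: "r \<in> cube n" and large: "Suc K \<le> k" for r k
  proof -
    obtain k' where k: "k = Suc k'" "K \<le> k'"
      using large by (cases k) auto
    with K r have "halting (alg k' n t r)"
      by blast
    then show ?thesis
      unfolding k alg.simps by (rule halting_obind) auto
  qed
  moreover have "(C, e) \<in> (\<lambda>(C, e). (C, lscale c e)) ` results n t"
    if r: "r \<in> cube n" and run: "Some (C, e) \<in> alg k n (Scal c t) r" for r k C e
  proof -
    obtain k' e' where "Some (C, e') \<in> alg k' n t r" "e = lscale c e'"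
      using run unfolding alg_Scal by blast
    with r show ?thesis
      unfolding results_def by force
  qed
  then have "results n (Scal c t) \<subseteq> (\<lambda>(C, e). (C, lscale c e)) ` results n t"
    unfolding results_def[of n "Scal c t"] by auto
  then have "finite (results n (Scal c t))"
    using alg_correct_finite[OF IH] finite_subset by blast
  ultimately show ?thesis
    unfolding alg_correct_def by blast
qed

text \<open>All binary connectives have this shape: the test \<open>P\<close> at the input picks one of two linear
  pieces, recorded by the constraint \<open>H\<close> and the expression \<open>E\<close>.\<close>

lemma alg_correct_binary:
  fixes P :: "real list \<Rightarrow> lin \<Rightarrow> lin \<Rightarrow> bool"
  assumes IH: "alg_correct n t1" "alg_correct n t2"
    and alg_Suc: "\<And>k r. alg (Suc k) n T r = obind (alg k n t1 r) (\<lambda>(C1, e1). obind (alg k n t2 r) (\<lambda>(C2, e2).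
        {Some (insert (H (P r e1 e2) e1 e2) (C1 \<union> C2), E (P r e1 e2) e1 e2)}))"
    and holds_H: "\<And>r e1 e2. holds r (H (P r e1 e2) e1 e2)"
    and correct: "\<And>p e1 e2 s. length s = n \<Longrightarrow> holds s (H p e1 e2) \<Longrightarrow>
        lev e1 s = sem t1 s \<Longrightarrow> lev e2 s = sem t2 s \<Longrightarrow> lev (E p e1 e2) s = sem T s"
  shows "alg_correct n T"
proof -
  have alg_T: "\<exists>k' C1 e1 C2 e2. k = Suc k' \<and> Some (C1, e1) \<in> alg k' n t1 r \<and> Some (C2, e2) \<in> alg k' n t2 r
      \<and> C = insert (H (P r e1 e2) e1 e2) (C1 \<union> C2) \<and> e = E (P r e1 e2) e1 e2"
    if run: "Some (C, e) \<in> alg k n T r" for k r C e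
  proof -
    obtain k' where k: "k = Suc k'"
      using alg_Some_Suc[OF run] by blast
    show ?thesis
      using run unfolding k alg_Suc by (force simp: obind_Some)
  qed
  obtain K1 K2 where K: "\<forall>r\<in>cube n. \<forall>k\<ge>K1. halting (alg k n t1 r)" "\<forall>r\<in>cube n. \<forall>k\<ge>K2. halting (alg k n t2 r)"
    using alg_correct_halting[OF IH(1)] alg_correct_halting[OF IH(2)] by blast
  have "sound_result n T r C e" if r: "r \<in> cube n" and run: "Some (C, e) \<in> alg k n T r" for r k C e
  proof -
    obtain k' C1 e1 C2 e2 where runs: "Some (C1, e1) \<in> alg k' n t1 r" "Some (C2, e2) \<in> alg k' n t2 r"
      and C: "C = insert (H (P r e1 e2) e1 e2) (C1 \<union> C2)" and e: "e = E (P r e1 e2) e1 e2"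
      using alg_T[OF run] by blast
    have "sound_result n t1 r C1 e1" "sound_result n t2 r C2 e2"
      using alg_correct_sound[OF IH(1) r runs(1)] alg_correct_sound[OF IH(2) r runs(2)] .
    then show ?thesis
      unfolding sound_result_def C e using holds_H correct by auto
  qed
  moreover have "halting (alg k n T r)" if r: "r \<in> cube n" and large: "Suc (max K1 K2) \<le> k" for r k
  proof -
    obtain k' where k: "k = Suc k'" "K1 \<le> k'" "K2 \<le> k'"
      using large by (cases k) auto
    with K r have t1: "halting (alg k' n t1 r)" and t2: "halting (alg k' n t2 r)"
      by blast+
    show ?thesis
      unfolding k alg_Suc
    proof (rule halting_obind[OF t1])
      fix a
      show "halting ((\<lambda>(C1, e1). obind (alg k' n t2 r) (\<lambda>(C2, e2).
          {Some (insert (H (P r e1 e2) e1 e2) (C1 \<union> C2), E (P r e1 e2) e1 e2)})) a)"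
        unfolding case_prod_beta by (rule halting_obind[OF t2]) (simp add: case_prod_beta)
    qed
  qed
  moreover have "(C, e) \<in> (\<lambda>(p, (C1, e1), (C2, e2)). (insert (H p e1 e2) (C1 \<union> C2), E p e1 e2))
      ` (UNIV \<times> results n t1 \<times> results n t2)"
    if r: "r \<in> cube n" and run: "Some (C, e) \<in> alg k n T r" for r k C e
  proof -
    obtain k' C1 e1 C2 e2 where "Some (C1, e1) \<in> alg k' n t1 r" "Some (C2, e2) \<in> alg k' n t2 r"
      and "C = insert (H (P r e1 e2) e1 e2) (C1 \<union> C2)" "e = E (P r e1 e2) e1 e2"
      using alg_T[OF run] by blast
    with r show ?thesis
      unfolding results_def by (intro rev_image_eqI[of "(P r e1 e2, (C1, e1), (C2, e2))"]) auto
  qed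
  then have "results n T \<subseteq> (\<lambda>(p, (C1, e1), (C2, e2)). (insert (H p e1 e2) (C1 \<union> C2), E p e1 e2))
      ` (UNIV \<times> results n t1 \<times> results n t2)"
    unfolding results_def[of n T] by auto
  then have "finite (results n T)"
    by (rule finite_subset) (use alg_correct_finite[OF IH(1)] alg_correct_finite[OF IH(2)] in simp)
  ultimately show ?thesis
    unfolding alg_correct_def by blast
qed

lemma if_Some_insert:
  "(if p then {Some (X \<union> {a}, y)} else {Some (X \<union> {a'}, y')})
    = {Some (insert (if p then a else a') X, if p then y else y')}"
  by simp

lemma alg_correct_Join: "alg_correct n t1 \<Longrightarrow> alg_correct n t2 \<Longrightarrow> alg_correct n (Join t1 t2)"
  by (rule alg_correct_binary[where P = "\<lambda>r e1 e2. lev e1 r \<le> lev e2 r"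
        and H = "\<lambda>p e1 e2. if p then Le e1 e2 else Le e2 e1" and E = "\<lambda>p e1 e2. if p then e2 else e1"])
    (simp_all only: alg.simps if_Some_insert, auto)

lemma alg_correct_Meet: "alg_correct n t1 \<Longrightarrow> alg_correct n t2 \<Longrightarrow> alg_correct n (Meet t1 t2)"
  by (rule alg_correct_binary[where P = "\<lambda>r e1 e2. lev e1 r \<le> lev e2 r"
        and H = "\<lambda>p e1 e2. if p then Le e1 e2 else Le e2 e1" and E = "\<lambda>p e1 e2. if p then e1 else e2"])
    (simp_all only: alg.simps if_Some_insert, auto)

lemma alg_correct_Oplus: "alg_correct n t1 \<Longrightarrow> alg_correct n t2 \<Longrightarrow> alg_correct n (Oplus t1 t2)"
  by (rule alg_correct_binary[where P = "\<lambda>r e1 e2. lev (ladd e1 e2) r \<le> 1"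
        and H = "\<lambda>p e1 e2. if p then Le (ladd e1 e2) (lconst 1) else Le (lconst 1) (ladd e1 e2)"
        and E = "\<lambda>p e1 e2. if p then ladd e1 e2 else lconst 1"])
    (simp_all only: alg.simps if_Some_insert, auto)

lemma alg_correct_Odot: "alg_correct n t1 \<Longrightarrow> alg_correct n t2 \<Longrightarrow> alg_correct n (Odot t1 t2)"
  by (rule alg_correct_binary[where P = "\<lambda>r e1 e2. lev (ladd e1 e2) r \<le> 1"
        and H = "\<lambda>p e1 e2. if p then Le (ladd e1 e2) (lconst 1) else Le (lconst 1) (ladd e1 e2)"
        and E = "\<lambda>p e1 e2. if p then lconst 0 else lsub (ladd e1 e2) (lconst 1)"])
    (simp_all only: alg.simps if_Some_insert, auto)

lemma alg_correct_Var: "i < n \<Longrightarrow> alg_correct n (Var i)"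
  by (rule alg_correct_atom) (auto simp: cube_length)

lemma alg_correct_Zero: "alg_correct n Zero"
  by (rule alg_correct_atom) auto

lemma alg_correct_One: "alg_correct n One"
  by (rule alg_correct_atom) auto

section \<open>The fixed-point loop\<close>

text \<open>The solution of \<open>x_(n+1) = e\<close>; meaningful only if the coefficient \<open>fst e n\<close> of \<open>x_(n+1)\<close> is not
  \<open>1\<close> (otherwise it is the junk value \<open>0\<close>).\<close>

definition fix_solution :: "nat \<Rightarrow> lin \<Rightarrow> lin" where
  "fix_solution n e = lscale (1 / (1 - fst e n)) (lin_rest n e)"

definition exit_cstrs :: "nat \<Rightarrow> cstr set \<Rightarrow> lin \<Rightarrow> cstr set" where
  "exit_cstrs n C e = (\<lambda>c. neg (substc n (fix_solution n e) c)) ` C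
     \<union> {Lt (lin_rest n e) (lconst 0), Lt (lconst 0) (lin_rest n e)}"

lemma lev_fix_solution: "lev (fix_solution n e) s = lev (lin_rest n e) s / (1 - fst e n)"
  by (simp add: fix_solution_def)

lemma fp_check_eq: "fp_check n r D d C e =
  (if fst e n \<noteq> 1 then
     (if holdsC (r @ [lev (fix_solution n e) r]) C
      then {Inl (D \<union> substC n d C \<union> substC n (fix_solution n e) C, fix_solution n e)}
      else {Inr (neg (substc n (fix_solution n e) c)) | c. c \<in> C \<and> \<not> holds (r @ [lev (fix_solution n e) r]) c})
   else if lev (lin_rest n e) r = 0
     then {Inl (D \<union> substC n d C \<union> {Le (lin_rest n e) (lconst 0), Le (lconst 0) (lin_rest n e)}, d)}
     else {Inr (if lev (lin_rest n e) r < 0 then Lt (lin_rest n e) (lconst 0) else Lt (lconst 0) (lin_rest n e))})"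
  by (simp add: fp_check_def Let_def lin_rest_def fix_solution_def)

lemma fp_check_nonempty: "fp_check n r D d C e \<noteq> {}"
  by (auto simp: fp_check_eq holdsC_def)

lemma fp_check_Inl:
  assumes "Inl res \<in> fp_check n r D d C e"
  obtains "fst e n \<noteq> 1" and "holdsC (r @ [lev (fix_solution n e) r]) C"
      and "res = (D \<union> substC n d C \<union> substC n (fix_solution n e) C, fix_solution n e)"
    | "fst e n = 1" and "lev (lin_rest n e) r = 0"
      and "res = (D \<union> substC n d C \<union> {Le (lin_rest n e) (lconst 0), Le (lconst 0) (lin_rest n e)}, d)"
  using assms by (auto simp: fp_check_eq split: if_splits)

lemma fp_check_Inr:
  assumes exit: "Inr N \<in> fp_check n r D d C e" and r: "length r = n"
  shows "N \<in> exit_cstrs n C e" and "holds r N"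
    and "\<And>s y. length s = n \<Longrightarrow> holds s N \<Longrightarrow> holdsC (s @ [y]) C \<Longrightarrow> lev e (s @ [y]) \<noteq> y"
proof -
  consider (solution) c where "fst e n \<noteq> 1" "c \<in> C" "N = neg (substc n (fix_solution n e) c)"
      "\<not> holds (r @ [lev (fix_solution n e) r]) c"
    | (unit) "fst e n = 1" "lev (lin_rest n e) r \<noteq> 0"
      "N = (if lev (lin_rest n e) r < 0 then Lt (lin_rest n e) (lconst 0) else Lt (lconst 0) (lin_rest n e))"
    using exit by (auto simp: fp_check_eq split: if_splits)
  note exit_cases = this
  show "N \<in> exit_cstrs n C e" "holds r N"
    using exit_cases by (cases; auto simp: exit_cstrs_def holds_substc[OF r])+
  show "lev e (s @ [y]) \<noteq> y" if s: "length s = n" and N: "holds s N" and C: "holdsC (s @ [y]) C" for s y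
  proof
    assume "lev e (s @ [y]) = y"
    then have fixed: "fst e n * y + lev (lin_rest n e) s = y"
      by (simp add: lev_snoc[OF s])
    show False
      using exit_cases
    proof cases
      case (solution c)
      with fixed have "lev (fix_solution n e) s = y"
        by (simp add: lev_fix_solution field_simps)
      with solution(2,3) N C show False
        by (auto simp: holds_substc[OF s] holdsC_def)
    next
      case unit
      with fixed N show False
        by (auto split: if_splits)
    qed
  qed
qed

definition orient_le :: "bool \<Rightarrow> lin \<Rightarrow> lin \<Rightarrow> cstr" where
  "orient_le up a b = (if up then Le a b else Le b a)"

lemma holds_orient_le [simp]: "holds s (orient_le up a b) \<longleftrightarrow> orient up (lev a s) \<le> orient up (lev b s)"
  by (cases up) (auto simp: orient_le_def)

definition nearest_bounds :: "bool \<Rightarrow> nat \<Rightarrow> real list \<Rightarrow> cstr set \<Rightarrow> lin set" where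
  "nearest_bounds up n r C = {b \<in> bounds up n C. \<forall>b'\<in>bounds up n C. orient up (lev b r) \<le> orient up (lev b' r)}"

lemma nearest_bounds_nonempty:
  assumes "finite C" and "range_c (Suc n) \<subseteq> C"
  shows "nearest_bounds up n r C \<noteq> {}"
proof -
  have "finite (bounds up n C)" "bounds up n C \<noteq> {}"
    using assms by (simp_all add: finite_bounds bounds_nonempty)
  then have "arg_min_on (\<lambda>b. orient up (lev b r)) (bounds up n C) \<in> nearest_bounds up n r C"
    unfolding nearest_bounds_def by (auto intro: arg_min_if_finite(1) arg_min_least)
  then show ?thesis
    by blast
qed

definition loop :: "bool \<Rightarrow> nat \<Rightarrow> nat \<Rightarrow> mterm \<Rightarrow> real list \<Rightarrow> cstr set \<Rightarrow> lin
    \<Rightarrow> (cstr set \<times> lin) option set" where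
  "loop up = (if up then loop_mu else loop_nu)"

definition start :: "bool \<Rightarrow> lin" where
  "start up = lconst (if up then 0 else 1)"

lemma alg_fixpoint_term: "alg (Suc k) n (fixpoint_term up T) r = loop up k n T r {} (start up)"
  by (cases up) (simp_all add: fixpoint_term_def loop_def start_def)

lemma loop_0 [simp]: "loop up 0 n t r D d = {None}"
  by (cases up) (simp_all add: loop_def)

lemma loop_Suc: "loop up (Suc k) n t r D d = obind (alg k (Suc n) t (r @ [lev d r])) (\<lambda>(C, e).
     \<Union>x\<in>fp_check n r D d C e. (case x of
        Inl res \<Rightarrow> {Some res}
      | Inr N \<Rightarrow> (\<Union>b\<in>nearest_bounds up n r C.
           loop up k n t r (D \<union> substC n d C \<union> {N} \<union> orient_le up b ` bounds up n C) (subst n b e))))"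
  by (cases up)
    (simp_all add: loop_def nearest_bounds_def bounds_def orient_le_def setcompr_eq_image
      del: split_paired_Ex cong: sum.case_cong)

lemma loop_Suc_SomeE:
  assumes "Some res \<in> loop up (Suc k) n t r D d"
  obtains (return) C e where "Some (C, e) \<in> alg k (Suc n) t (r @ [lev d r])" "Inl res \<in> fp_check n r D d C e"
    | (continue) C e N b where "Some (C, e) \<in> alg k (Suc n) t (r @ [lev d r])" "Inr N \<in> fp_check n r D d C e"
      "b \<in> nearest_bounds up n r C"
      "Some res \<in> loop up k n t r (D \<union> substC n d C \<union> {N} \<union> orient_le up b ` bounds up n C) (subst n b e)"
proof -
  obtain C e x where run: "Some (C, e) \<in> alg k (Suc n) t (r @ [lev d r])" and x: "x \<in> fp_check n r D d C e"
    and res: "Some res \<in> (case x of Inl res \<Rightarrow> {Some res} | Inr N \<Rightarrow> (\<Union>b\<in>nearest_bounds up n r C.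
         loop up k n t r (D \<union> substC n d C \<union> {N} \<union> orient_le up b ` bounds up n C) (subst n b e)))"
    using assms unfolding loop_Suc obind_Some by (auto simp del: sum.case)
  show ?thesis
  proof (cases x)
    case (Inl res')
    with x res show ?thesis
      using return[OF run] by simp
  next
    case (Inr N)
    with res obtain b where "b \<in> nearest_bounds up n r C"
      "Some res \<in> loop up k n t r (D \<union> substC n d C \<union> {N} \<union> orient_le up b ` bounds up n C) (subst n b e)"
      by auto
    with Inr x show ?thesis
      using continue[OF run] by blast
  qed
qed

locale fixpoint_run =
  fixes n :: nat and T :: mterm and up :: bool
  assumes monotone: "unit_monotone (Suc n) (sem T)" and body: "alg_correct (Suc n) T"
begin

abbreviation fp :: "real list \<Rightarrow> real" where
  "fp s \<equiv> sem (fixpoint_term up T) s"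

lemma body_results:
  assumes "(C, e) \<in> results (Suc n) T"
  shows "finite C" and "range_c (Suc n) \<subseteq> C"
proof -
  from assms obtain r k where "r \<in> cube (Suc n)" "Some (C, e) \<in> alg k (Suc n) T r"
    by (auto simp: results_def)
  from alg_correct_sound[OF body this] show "finite C" "range_c (Suc n) \<subseteq> C"
    by (simp_all add: sound_result_def)
qed

lemma body_run:
  assumes r: "r \<in> cube n" and y: "y \<in> {0..1}" and run: "Some (C, e) \<in> alg k (Suc n) T (r @ [y])"
  shows "holdsC (r @ [y]) C" and "finite C" and "range_c (Suc n) \<subseteq> C" and "(C, e) \<in> results (Suc n) T"
    and "\<And>s z. length s = n \<Longrightarrow> holdsC (s @ [z]) C \<Longrightarrow> lev e (s @ [z]) = sem T (s @ [z])"
proof -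
  have ry: "r @ [y] \<in> cube (Suc n)"
    using r y by (simp add: snoc_in_cube_iff)
  with run show "(C, e) \<in> results (Suc n) T"
    unfolding results_def by blast
  show "holdsC (r @ [y]) C" "finite C" "range_c (Suc n) \<subseteq> C"
    "\<And>s z. length s = n \<Longrightarrow> holdsC (s @ [z]) C \<Longrightarrow> lev e (s @ [z]) = sem T (s @ [z])"
    using alg_correct_sound[OF body ry run] by (simp_all add: sound_result_def)
qed

lemma affine_step:
  assumes s: "s \<in> cube n" and d0: "holdsC (s @ [d0]) C" "orient up d0 \<le> orient up (fp s)"
    and range: "range_c (Suc n) \<subseteq> C"
    and agree: "\<And>y. holdsC (s @ [y]) C \<Longrightarrow> lev e (s @ [y]) = sem T (s @ [y])"
    and nofix: "\<And>y. holdsC (s @ [y]) C \<Longrightarrow> lev e (s @ [y]) \<noteq> y"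
    and b: "b \<in> nearest_bounds up n s C"
  defines "d1 \<equiv> lev e (s @ [lev b s])"
  shows "orient up d0 < orient up d1" and "orient up d1 \<le> orient up (fp s)"
    and "\<And>y. holdsC (s @ [y]) C \<Longrightarrow> orient up y < orient up d1"
proof -
  have l: "length s = n"
    using s by (rule cube_length)
  define H where "H = {y. holdsC (s @ [y]) C}"
  have affine: "lev e (s @ [y]) = fst e n * y + lev (lin_rest n e) s" for y
    by (rule lev_snoc[OF l])
  note fp = sem_fixpoint_term[OF monotone s, where up = up]
  have "H \<subseteq> {0..1}"
    unfolding H_def using holdsC_snoc_unit_interval[OF s range] by blast
  moreover have "orient up y \<le> orient up (lev b s)" if "y \<in> H" for y
    using that b holdsC_snoc_le_bounds[OF l] unfolding H_def nearest_bounds_def by blast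
  moreover have "y \<in> H" if "orient up d0 \<le> orient up y" "orient up y < orient up (lev b s)" for y
  proof -
    have "\<forall>b'\<in>bounds up n C. orient up y < orient up (lev b' s)"
      using that(2) b unfolding nearest_bounds_def by fastforce
    then show ?thesis
      unfolding H_def using holdsC_snoc_below_bounds[OF l d0(1) that(1)] by blast
  qed
  moreover have "sem T (s @ [y]) = fst e n * y + lev (lin_rest n e) s" if "y \<in> H" for y
    using that agree affine unfolding H_def by simp
  moreover have "sem T (s @ [y]) \<noteq> y" if "y \<in> H" for y
    using that agree nofix unfolding H_def by simp
  moreover have "d0 \<in> H"
    using d0(1) unfolding H_def by simp
  ultimately show "orient up d0 < orient up d1" "orient up d1 \<le> orient up (fp s)"
    "\<And>y. holdsC (s @ [y]) C \<Longrightarrow> orient up y < orient up d1"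
    using extremal_fixpoint_affine_step[of "\<lambda>y. sem T (s @ [y])" "fp s" up H d0 "lev b s"
        "fst e n" "lev (lin_rest n e) s"]
      unit_monotone_snoc_mono[OF monotone s] fp d0(2)
    unfolding d1_def affine H_def by auto
qed

text \<open>Everything the loop produces is assembled from the finitely many results \<open>(C, e)\<close> of the body.\<close>

definition candidate_lins :: "cstr set \<Rightarrow> lin \<Rightarrow> lin set" where
  "candidate_lins C e = insert (fix_solution n e) ((\<lambda>b. subst n b e) ` bounds up n C)"

definition pool_lin :: "lin set" where
  "pool_lin = insert (start up) (\<Union>(C, e)\<in>results (Suc n) T. candidate_lins C e)"

definition candidate_cstrs :: "cstr set \<Rightarrow> lin \<Rightarrow> cstr set" where
  "candidate_cstrs C e = (\<Union>d\<in>pool_lin. substC n d C) \<union> exit_cstrs n C e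
     \<union> (\<Union>b\<in>bounds up n C. orient_le up b ` bounds up n C)
     \<union> {Le (lin_rest n e) (lconst 0), Le (lconst 0) (lin_rest n e)}"

definition pool_cstr :: "cstr set" where
  "pool_cstr = (\<Union>(C, e)\<in>results (Suc n) T. candidate_cstrs C e)"

lemma finite_pool_lin: "finite pool_lin"
proof -
  have "finite (candidate_lins C e)" if "(C, e) \<in> results (Suc n) T" for C e
    using body_results(1)[OF that] by (simp add: candidate_lins_def finite_bounds)
  then show ?thesis
    unfolding pool_lin_def using alg_correct_finite[OF body] by (auto intro: finite_UN_I)
qed

lemma finite_pool_cstr: "finite pool_cstr"
proof -
  have "finite (candidate_cstrs C e)" if "(C, e) \<in> results (Suc n) T" for C e
    using body_results(1)[OF that] finite_pool_lin
    by (simp add: candidate_cstrs_def finite_bounds exit_cstrs_def substC_def)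
  then show ?thesis
    unfolding pool_cstr_def using alg_correct_finite[OF body] by (auto intro: finite_UN_I)
qed

lemma candidates_in_pools:
  assumes "(C, e) \<in> results (Suc n) T"
  shows "candidate_lins C e \<subseteq> pool_lin" and "candidate_cstrs C e \<subseteq> pool_cstr"
  using UN_upper[OF assms, of "\<lambda>(C, e). candidate_lins C e"] UN_upper[OF assms, of "\<lambda>(C, e). candidate_cstrs C e"]
  by (auto simp: pool_lin_def pool_cstr_def)

definition loop_invariant :: "real list \<Rightarrow> cstr set \<Rightarrow> lin \<Rightarrow> bool" where
  "loop_invariant r D d \<longleftrightarrow> holdsC r D \<and> D \<subseteq> pool_cstr \<and> d \<in> pool_lin \<and> lev d r \<in> {0..1}
     \<and> (\<forall>s\<in>cube n. holdsC s D \<longrightarrow> orient up (lev d s) \<le> orient up (fp s))"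

lemma loop_invariant_start: "r \<in> cube n \<Longrightarrow> loop_invariant r {} (start up)"
proof -
  have "orient up (lev (start up) s) \<le> orient up (fp s)" if "s \<in> cube n" for s
    using sem_fixpoint_term(1)[OF monotone that, where up = up] by (cases up) (auto simp: start_def)
  then show "loop_invariant r {} (start up)"
    by (auto simp: loop_invariant_def start_def pool_lin_def)
qed

lemma loop_step:
  assumes r: "r \<in> cube n" and inv: "loop_invariant r D d"
    and run: "Some (C, e) \<in> alg k (Suc n) T (r @ [lev d r])"
    and exit: "Inr N \<in> fp_check n r D d C e" and b: "b \<in> nearest_bounds up n r C"
  defines "D' \<equiv> D \<union> substC n d C \<union> {N} \<union> orient_le up b ` bounds up n C"
  shows "loop_invariant r D' (subst n b e)"
    and "orient up (lev d r) < orient up (lev (subst n b e) r)"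
    and "\<And>y. holdsC (r @ [y]) C \<Longrightarrow> orient up y < orient up (lev (subst n b e) r)"
proof -
  have l: "length r = n"
    using r by (rule cube_length)
  have D: "holdsC r D" "D \<subseteq> pool_cstr" "d \<in> pool_lin" "lev d r \<in> {0..1}"
    and below: "\<And>s. s \<in> cube n \<Longrightarrow> holdsC s D \<Longrightarrow> orient up (lev d s) \<le> orient up (fp s)"
    using inv by (auto simp: loop_invariant_def)
  note body = body_run[OF r D(4) run]
  have "b \<in> bounds up n C"
    using b by (simp add: nearest_bounds_def)
  have step: "orient up (lev d s) < orient up (lev (subst n b e) s)
      \<and> orient up (lev (subst n b e) s) \<le> orient up (fp s)
      \<and> (\<forall>y. holdsC (s @ [y]) C \<longrightarrow> orient up y < orient up (lev (subst n b e) s))"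
    if s: "s \<in> cube n" and hs: "holdsC s D'" for s
  proof -
    have ls: "length s = n"
      using s by (rule cube_length)
    from hs have "holdsC s D" and hd: "holdsC (s @ [lev d s]) C" and "holds s N"
      and nearest: "b \<in> nearest_bounds up n s C"
      using holdsC_substC[OF ls] \<open>b \<in> bounds up n C\<close>
      by (auto simp: D'_def holdsC_image nearest_bounds_def)
    note affine_step[OF s hd below[OF s \<open>holdsC s D\<close>] body(3) body(5)[OF ls]
        fp_check_Inr(3)[OF exit l ls \<open>holds s N\<close>] nearest]
    then show ?thesis
      using lev_subst[OF ls] by auto
  qed
  have "holdsC r D'"
    using D(1) body(1) fp_check_Inr(2)[OF exit l] b
    by (auto simp: D'_def holdsC_substC[OF l] holdsC_image nearest_bounds_def)
  note step_r = step[OF r this]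
  then show "orient up (lev d r) < orient up (lev (subst n b e) r)"
    and "\<And>y. holdsC (r @ [y]) C \<Longrightarrow> orient up y < orient up (lev (subst n b e) r)"
    by auto
  have "lev (subst n b e) r \<in> {0..1}"
    using step_r D(4) sem_fixpoint_term(1)[OF monotone r, where up = up] by (cases up) auto
  moreover have "substC n d C \<union> {N} \<union> orient_le up b ` bounds up n C \<subseteq> candidate_cstrs C e"
    using D(3) fp_check_Inr(1)[OF exit l] \<open>b \<in> bounds up n C\<close> unfolding candidate_cstrs_def by blast
  with D(2) candidates_in_pools(2)[OF body(4)] have "D' \<subseteq> pool_cstr"
    unfolding D'_def by blast
  moreover have "subst n b e \<in> pool_lin"
    using candidates_in_pools(1)[OF body(4)] \<open>b \<in> bounds up n C\<close> unfolding candidate_lins_def by blast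
  ultimately show "loop_invariant r D' (subst n b e)"
    using \<open>holdsC r D'\<close> step by (auto simp: loop_invariant_def)
qed

lemma loop_return:
  assumes r: "r \<in> cube n" and inv: "loop_invariant r D d"
    and run: "Some (C, e) \<in> alg k (Suc n) T (r @ [lev d r])"
    and return: "Inl (C', e') \<in> fp_check n r D d C e"
  shows "sound_result n (fixpoint_term up T) r C' e'" and "C' \<subseteq> pool_cstr" and "e' \<in> pool_lin"
proof -
  have l: "length r = n"
    using r by (rule cube_length)
  have D: "holdsC r D" "D \<subseteq> pool_cstr" "d \<in> pool_lin" "lev d r \<in> {0..1}"
    and below: "\<And>s. s \<in> cube n \<Longrightarrow> holdsC s D \<Longrightarrow> orient up (lev d s) \<le> orient up (fp s)"
    using inv by (auto simp: loop_invariant_def)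
  note body = body_run[OF r D(4) run]
  have range: "range_c n \<subseteq> substC n d C"
    using range_c_subst[of n d] body(3) by (auto simp: substC_def)
  have in_cube: "s \<in> cube n" if "length s = n" "holdsC s (substC n d C)" for s
    using that holdsC_mono[OF that(2) range] holdsC_range_c_iff by blast
  have unit: "y \<in> {0..1}" if "s \<in> cube n" "holdsC (s @ [y]) C" for s y
    using holdsC_snoc_unit_interval[OF that(1) body(3) that(2)] .
  have fixed: "fp s = y" if s: "s \<in> cube n" and hd: "holdsC (s @ [lev d s]) C" and hD: "holdsC s D"
    and hy: "holdsC (s @ [y]) C" and fixed: "sem T (s @ [y]) = y" and "fst e n \<noteq> 1 \<or> y = lev d s" for s y
  proof -
    have ls: "length s = n"
      using s by (rule cube_length)
    note fp = sem_fixpoint_term[OF monotone s, where up = up]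
    have d_below: "orient up (lev d s) \<le> orient up (fp s)"
      using below[OF s hD] .
    have y_above: "orient up (fp s) \<le> orient up y"
      using fp(3)[OF unit[OF s hy]] fixed by simp
    have "holdsC (s @ [fp s]) C"
      by (rule holdsC_snoc_between_orient[OF ls hd hy d_below y_above])
    then have "fst e n * fp s + lev (lin_rest n e) s = fp s"
      using body(5)[OF ls] fp(2) lev_snoc[OF ls] by metis
    moreover have "fst e n * y + lev (lin_rest n e) s = y"
      using body(5)[OF ls hy] fixed lev_snoc[OF ls] by metis
    ultimately have "(1 - fst e n) * (fp s - y) = 0"
      by (simp add: algebra_simps)
    then show ?thesis
      using that(6) d_below y_above by (cases up) auto
  qed
  from return have "sound_result n (fixpoint_term up T) r C' e' \<and> C' \<subseteq> pool_cstr \<and> e' \<in> pool_lin"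
  proof (cases rule: fp_check_Inl)
    case 1
    note solution = this
    let ?f = "fix_solution n e"
    have f: "?f \<in> pool_lin"
      using candidates_in_pools(1)[OF body(4)] by (simp add: candidate_lins_def)
    have "lev ?f s = sem (fixpoint_term up T) s"
      if ls: "length s = n" and hs: "holdsC s (D \<union> substC n d C \<union> substC n ?f C)" for s
    proof -
      have s: "s \<in> cube n"
        using in_cube[OF ls] hs by simp
      have hf: "holdsC (s @ [lev ?f s]) C"
        using hs holdsC_substC[OF ls] by simp
      have "sem T (s @ [lev ?f s]) = lev ?f s"
        using body(5)[OF ls hf] solution(1)
        by (simp add: lev_snoc[OF ls] lev_fix_solution field_simps)
      with hs hf s show ?thesis
        using fixed[of s "lev ?f s"] solution(1) holdsC_substC[OF ls] by auto
    qed
    moreover have "substC n d C \<union> substC n ?f C \<subseteq> pool_cstr"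
      using candidates_in_pools(2)[OF body(4)] D(3) f unfolding candidate_cstrs_def by blast
    ultimately show ?thesis
      using solution D finite_pool_cstr body(1,2) range holdsC_substC[OF l] f
      by (auto simp: sound_result_def intro: finite_subset)
  next
    case 2
    note unit_coefficient = this
    have "lev d s = sem (fixpoint_term up T) s"
      if ls: "length s = n" and hs: "holdsC s (D \<union> substC n d C \<union> {Le (lin_rest n e) (lconst 0), Le (lconst 0) (lin_rest n e)})"
      for s
    proof -
      have s: "s \<in> cube n"
        using in_cube[OF ls] hs by simp
      have hd: "holdsC (s @ [lev d s]) C"
        using hs holdsC_substC[OF ls] by simp
      have "sem T (s @ [lev d s]) = lev d s"
        using body(5)[OF ls hd] unit_coefficient(1) hs by (simp add: lev_snoc[OF ls])
      with hs hd s show ?thesis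
        using fixed[of s "lev d s"] holdsC_substC[OF ls] by auto
    qed
    moreover have "substC n d C \<union> {Le (lin_rest n e) (lconst 0), Le (lconst 0) (lin_rest n e)} \<subseteq> pool_cstr"
      using candidates_in_pools(2)[OF body(4)] D(3) unfolding candidate_cstrs_def by blast
    ultimately show ?thesis
      using unit_coefficient D finite_pool_cstr body(1,2) range holdsC_substC[OF l]
      by (auto simp: sound_result_def intro: finite_subset)
  qed
  then show "sound_result n (fixpoint_term up T) r C' e'" "C' \<subseteq> pool_cstr" "e' \<in> pool_lin"
    by simp_all
qed

lemma loop_sound:
  assumes "r \<in> cube n" and "loop_invariant r D d" and "Some (C', e') \<in> loop up k n T r D d"
  shows "sound_result n (fixpoint_term up T) r C' e' \<and> C' \<subseteq> pool_cstr \<and> e' \<in> pool_lin"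
  using assms(2,3)
proof (induction k arbitrary: D d)
  case 0
  then show ?case by simp
next
  case (Suc k)
  from Suc.prems(2) show ?case
  proof (cases rule: loop_Suc_SomeE)
    case (return C e)
    then show ?thesis
      using loop_return[OF assms(1) Suc.prems(1)] by blast
  next
    case (continue C e N b)
    then show ?thesis
      using Suc.IH loop_step(1)[OF assms(1) Suc.prems(1)] by blast
  qed
qed

text \<open>Each step jumps past the region of the body result it used and never moves back, so the
  number of body results whose region still lies ahead decreases.\<close>

definition remaining :: "real list \<Rightarrow> lin \<Rightarrow> nat" where
  "remaining r d = card {C \<in> fst ` results (Suc n) T. \<exists>y. orient up (lev d r) \<le> orient up y \<and> holdsC (r @ [y]) C}"

lemma remaining_le: "remaining r d \<le> card (fst ` results (Suc n) T)"
  unfolding remaining_def using alg_correct_finite[OF body] by (intro card_mono) auto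

lemma remaining_decreases:
  assumes "orient up (lev d r) < orient up (lev d' r)" and "(C, e) \<in> results (Suc n) T"
    and "holdsC (r @ [lev d r]) C" and "\<And>y. holdsC (r @ [y]) C \<Longrightarrow> orient up y < orient up (lev d' r)"
  shows "remaining r d' < remaining r d"
  unfolding remaining_def
proof (rule psubset_card_mono)
  show "finite {C \<in> fst ` results (Suc n) T. \<exists>y. orient up (lev d r) \<le> orient up y \<and> holdsC (r @ [y]) C}"
    using alg_correct_finite[OF body] by simp
  have "C \<in> {C \<in> fst ` results (Suc n) T. \<exists>y. orient up (lev d r) \<le> orient up y \<and> holdsC (r @ [y]) C}"
    using assms(2,3) by force
  moreover have "C \<notin> {C \<in> fst ` results (Suc n) T. \<exists>y. orient up (lev d' r) \<le> orient up y \<and> holdsC (r @ [y]) C}"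
    using assms(4) by (auto simp: not_le)
  ultimately show "{C \<in> fst ` results (Suc n) T. \<exists>y. orient up (lev d' r) \<le> orient up y \<and> holdsC (r @ [y]) C}
      \<subset> {C \<in> fst ` results (Suc n) T. \<exists>y. orient up (lev d r) \<le> orient up y \<and> holdsC (r @ [y]) C}"
    using assms(1) by (blast intro: order.trans less_imp_le)
qed

lemma loop_halting:
  assumes K: "\<forall>r\<in>cube (Suc n). \<forall>k\<ge>K. halting (alg k (Suc n) T r)" and r: "r \<in> cube n"
  shows "loop_invariant r D d \<Longrightarrow> K + 1 + remaining r d \<le> k \<Longrightarrow> halting (loop up k n T r D d)"
proof (induction k arbitrary: D d)
  case 0
  then show ?case by simp
next
  case (Suc k)
  have unit: "lev d r \<in> {0..1}"
    using Suc.prems(1) by (simp add: loop_invariant_def)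
  with r K Suc.prems(2) have "halting (alg k (Suc n) T (r @ [lev d r]))"
    by (simp add: snoc_in_cube_iff)
  then show ?case
    unfolding loop_Suc
  proof (rule halting_obind)
    fix a assume run: "Some a \<in> alg k (Suc n) T (r @ [lev d r])"
    obtain C e where a: "a = (C, e)"
      by (cases a)
    note body = body_run[OF r unit run[unfolded a]]
    have continue: "halting (loop up k n T r (D \<union> substC n d C \<union> {N} \<union> orient_le up b ` bounds up n C) (subst n b e))"
      if exit: "Inr N \<in> fp_check n r D d C e" and b: "b \<in> nearest_bounds up n r C" for N b
    proof (rule Suc.IH)
      note step = loop_step[OF r Suc.prems(1) run[unfolded a] exit b]
      show "loop_invariant r (D \<union> substC n d C \<union> {N} \<union> orient_le up b ` bounds up n C) (subst n b e)"
        by (rule step(1))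
      have "remaining r (subst n b e) < remaining r d"
        using remaining_decreases[OF step(2) body(4,1) step(3)] .
      then show "K + 1 + remaining r (subst n b e) \<le> k"
        using Suc.prems(2) by simp
    qed
    show "halting ((\<lambda>(C, e). \<Union>x\<in>fp_check n r D d C e. case x of Inl res \<Rightarrow> {Some res}
        | Inr N \<Rightarrow> \<Union>b\<in>nearest_bounds up n r C.
          loop up k n T r (D \<union> substC n d C \<union> {N} \<union> orient_le up b ` bounds up n C) (subst n b e)) a)"
      unfolding a prod.case
    proof (rule halting_UN[OF fp_check_nonempty])
      fix x assume x: "x \<in> fp_check n r D d C e"
      show "halting (case x of Inl res \<Rightarrow> {Some res} | Inr N \<Rightarrow> \<Union>b\<in>nearest_bounds up n r C.
          loop up k n T r (D \<union> substC n d C \<union> {N} \<union> orient_le up b ` bounds up n C) (subst n b e))"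
      proof (cases x)
        case (Inr N)
        have "halting (\<Union>b\<in>nearest_bounds up n r C.
            loop up k n T r (D \<union> substC n d C \<union> {N} \<union> orient_le up b ` bounds up n C) (subst n b e))"
          using continue x Inr by (intro halting_UN nearest_bounds_nonempty[OF body(2,3)]) blast
        with Inr show ?thesis
          by simp
      qed simp
    qed
  qed
qed

theorem alg_correct_fixpoint_term: "alg_correct n (fixpoint_term up T)"
proof -
  obtain K where K: "\<forall>r\<in>cube (Suc n). \<forall>k\<ge>K. halting (alg k (Suc n) T r)"
    using alg_correct_halting[OF body] by blast
  have run: "sound_result n (fixpoint_term up T) r C e \<and> C \<subseteq> pool_cstr \<and> e \<in> pool_lin"
    if r: "r \<in> cube n" and run: "Some (C, e) \<in> alg k n (fixpoint_term up T) r" for r k C e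
  proof -
    obtain k' where "k = Suc k'"
      using alg_Some_Suc[OF run] by blast
    with run show ?thesis
      using loop_sound[OF r loop_invariant_start[OF r]] by (simp add: alg_fixpoint_term)
  qed
  have "halting (alg k n (fixpoint_term up T) r)"
    if r: "r \<in> cube n" and large: "K + card (fst ` results (Suc n) T) + 2 \<le> k" for r k
  proof -
    obtain k' where k: "k = Suc k'"
      using large by (cases k) auto
    have "K + 1 + remaining r (start up) \<le> k'"
      using remaining_le[of r "start up"] large k by simp
    then show ?thesis
      unfolding k alg_fixpoint_term using loop_halting[OF K r loop_invariant_start[OF r]] by blast
  qed
  moreover have "results n (fixpoint_term up T) \<subseteq> Pow pool_cstr \<times> pool_lin"
    using run unfolding results_def by fastforce
  then have "finite (results n (fixpoint_term up T))"
    by (rule finite_subset) (simp add: finite_pool_cstr finite_pool_lin)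
  ultimately show ?thesis
    using run unfolding alg_correct_def by blast
qed

end

lemma alg_correct_of_wf: "wf_term n t \<Longrightarrow> alg_correct n t"
proof (induction t arbitrary: n)
  case (Mu t)
  then interpret fixpoint_run n t True
    by unfold_locales (simp_all add: sem_unit_monotone)
  show ?case
    using alg_correct_fixpoint_term by (simp add: fixpoint_term_def)
next
  case (Nu t)
  then interpret fixpoint_run n t False
    by unfold_locales (simp_all add: sem_unit_monotone)
  show ?case
    using alg_correct_fixpoint_term by (simp add: fixpoint_term_def)
qed (simp_all add: alg_correct_Var alg_correct_Zero alg_correct_One alg_correct_Scal
    alg_correct_Join alg_correct_Meet alg_correct_Oplus alg_correct_Odot)

lemma represents_results:
  assumes "alg_correct n t"
  shows "represents n (results n t) (sem t)"
  unfolding represents_def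
proof (intro conjI ballI)
  fix r assume r: "r \<in> cube n"
  obtain K where "\<forall>r\<in>cube n. \<forall>k\<ge>K. halting (alg k n t r)"
    using alg_correct_halting[OF assms] by blast
  with r have "halting (alg K n t r)"
    by blast
  then obtain res where run: "Some res \<in> alg K n t r"
    by (rule halting_SomeE)
  obtain C e where res: "res = (C, e)"
    by (cases res)
  have "(C, e) \<in> results n t"
    using r run res unfolding results_def by blast
  moreover have "holdsC r C"
    using alg_correct_sound[OF assms r run[unfolded res]] by (simp add: sound_result_def)
  ultimately show "\<exists>(C, e)\<in>results n t. holdsC r C"
    by blast
next
  fix res assume "res \<in> results n t"
  then obtain r k where r: "r \<in> cube n" and run: "Some res \<in> alg k n t r"
    unfolding results_def by blast
  obtain C e where res: "res = (C, e)"
    by (cases res)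
  have "lev e s = sem t s" if "s \<in> cube n" "holdsC s C" for s
    using alg_correct_sound[OF assms r run[unfolded res]] cube_length[OF that(1)] that(2)
    unfolding sound_result_def by blast
  then show "case res of (C, e) \<Rightarrow> \<forall>r\<in>cube n. holdsC r C \<longrightarrow> lev e r = sem t r"
    unfolding res by simp
qed

theorem mainTheorem2:
  fixes n :: nat and t :: mterm
  assumes "wf_term n t"
  shows "(\<forall>r\<in>cube n. \<exists>k. None \<notin> alg k n t r \<and> alg k n t r \<noteq> {})
       \<and> (\<forall>r\<in>cube n. \<forall>k C e. Some (C, e) \<in> alg k n t r \<longrightarrow>
            holdsC r C \<and>
            (\<forall>s. length s = n \<longrightarrow> holdsC s C \<longrightarrow> s \<in> cube n \<and> lev e s = sem t s))
       \<and> finite (results n t)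
       \<and> represents n (results n t) (sem t)"
proof -
  have correct: "alg_correct n t"
    using assms by (rule alg_correct_of_wf)
  obtain K where "\<forall>r\<in>cube n. \<forall>k\<ge>K. halting (alg k n t r)"
    using alg_correct_halting[OF correct] by blast
  then have "\<forall>r\<in>cube n. \<exists>k. None \<notin> alg k n t r \<and> alg k n t r \<noteq> {}"
    unfolding halting_def by blast
  moreover have "holdsC r C \<and> (\<forall>s. length s = n \<longrightarrow> holdsC s C \<longrightarrow> s \<in> cube n \<and> lev e s = sem t s)"
    if "r \<in> cube n" and "Some (C, e) \<in> alg k n t r" for r k C e
  proof -
    have sound: "sound_result n t r C e"
      using alg_correct_sound[OF correct that] .
    then show ?thesis
      using sound_result_in_cube[OF sound] unfolding sound_result_def by blast
  qed
  ultimately show ?thesis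
    using alg_correct_finite[OF correct] represents_results[OF correct] by blast
qed

end
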